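(* Let $\Delta=\mathrm{conv}\{0,\,e_1+e_2,\,e_1+e_3,\,e_2+e_3\}\subset\mathbb{R}^3$, and let $\alpha,\beta,\gamma$ be real numbers with $\tfrac12\le\alpha,\beta,\gamma<1$ and $\alpha+\beta+\gamma=2$. Let $$\Lambda=\mathrm{span}_{\mathbb{Z}}\left\{\begin{pmatrix}-\alpha\\ \beta\\ \gamma\end{pmatrix},\begin{pmatrix}\alpha\\ -\beta\\ \gamma\end{pmatrix},\begin{pmatrix}\alpha\\ \beta\\ -\gamma\end{pmatrix}\right\}.$$ Then $\Delta$ is lattice complete with respect to $\Lambda$.
   Context: $e_1,e_2,e_3$ are the standard basis vectors of $\mathbb{R}^3$. For a $3$-dimensional lattice $\Lambda$ (discrete subgroup spanning $\mathbb{R}^3$) and a convex body $C$ (compact convex, non-empty interior): a segment $[a,b]$ is a lattice segment if $b-a$ is parallel to a nonzero vector of $\Lambda$, with lattice length $|b-a|/|v|$ where $v$ generates $\Lambda\cap\mathrm{span}\{b-a\}$ and is a positive multiple of $b-a$; $\mathrm{diam}_\Lambda(C)$ is the maximum lattice length of a lattice segment in $C$; $C$ is lattice complete if no convex body $C'\supsetneq C$ has $\mathrm{diam}_\Lambda(C')=\mathrm{diam}_\Lambda(C)$. *)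

theory Defs
  imports "HOL-Analysis.Analysis"
begin

definition e :: "3 \<Rightarrow> real^3" where
  "e i = axis i 1"

definition is_lattice :: "(real^3) set \<Rightarrow> bool" where
  "is_lattice L \<longleftrightarrow> 0 \<in> L \<and> (\<forall>x\<in>L. \<forall>y\<in>L. x + y \<in> L \<and> x - y \<in> L)
     \<and> (\<forall>x\<in>L. \<exists>r>0. L \<inter> ball x r = {x}) \<and> span L = UNIV"

definition int_span3 :: "real^3 \<Rightarrow> real^3 \<Rightarrow> real^3 \<Rightarrow> (real^3) set" where
  "int_span3 u v w = {of_int i *\<^sub>R u + of_int j *\<^sub>R v + of_int k *\<^sub>R w | i j k. True}"

definition convex_body :: "(real^3) set \<Rightarrow> bool" where
  "convex_body C \<longleftrightarrow> compact C \<and> convex C \<and> interior C \<noteq> {}"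

text \<open>\<open>[a,b]\<close> is a lattice segment: \<open>b - a\<close> is parallel to a nonzero lattice vector
  (we require \<open>a \<noteq> b\<close>, so that the lattice length is well defined).\<close>
definition lattice_segment :: "(real^3) set \<Rightarrow> real^3 \<Rightarrow> real^3 \<Rightarrow> bool" where
  "lattice_segment L a b \<longleftrightarrow> a \<noteq> b \<and> (\<exists>v\<in>L. v \<noteq> 0 \<and> (\<exists>t::real. b - a = t *\<^sub>R v))"

definition primitive_dir :: "(real^3) set \<Rightarrow> real^3 \<Rightarrow> real^3" where
  "primitive_dir L d = (THE v. v \<in> L \<and> (\<exists>c>0. v = c *\<^sub>R d) \<and>
       L \<inter> span {d} = range (\<lambda>k::int. of_int k *\<^sub>R v))"

definition lattice_length :: "(real^3) set \<Rightarrow> real^3 \<Rightarrow> real^3 \<Rightarrow> real" where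
  "lattice_length L a b = norm (b - a) / norm (primitive_dir L (b - a))"

definition lattice_diam :: "(real^3) set \<Rightarrow> (real^3) set \<Rightarrow> real" where
  "lattice_diam L C = Sup {lattice_length L a b | a b.
       lattice_segment L a b \<and> closed_segment a b \<subseteq> C}"

definition lattice_complete :: "(real^3) set \<Rightarrow> (real^3) set \<Rightarrow> bool" where
  "lattice_complete L C \<longleftrightarrow>
     \<not> (\<exists>C'. convex_body C' \<and> C \<subset> C' \<and> lattice_diam L C' = lattice_diam L C)"

end

theory Submission
  imports Defs
begin

(* The lattice consists of the vectors (\<alpha> A, \<beta> B, \<gamma> C) with integers A, B, C of equal
   parity. A nonzero one either has all of A, B, C odd, so its l1-norm is at least
   \<alpha> + \<beta> + \<gamma> = 2, or all even, so one coordinate has absolute value at least 2 * 1/2 = 1.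
   Since the l1-diameter of \<Delta> is 2 and each coordinate varies by at most 1 on \<Delta>, every
   lattice segment in \<Delta> has lattice length at most 1.

   The lattice vector v = (\<alpha>, \<beta>, \<gamma>) lies in the relative interior of the facet
   x1 + x2 + x3 = 2. So if a convex body C contains \<Delta> and a point p beyond that facet, then
   C contains s v for some s > 1 (on a segment from p to a point of the facet near v), and
   [0, s v] has lattice length s > 1.
   The other three facets reduce to this one via the affine symmetries x \<mapsto> w + diag(1 - 2 w) x
   of \<Delta>, for w a vertex, whose linear parts preserve the lattice. *)

lemma int_scale_mem_if_diff_closed:
  fixes G :: "'a::real_vector set"
  assumes diff: "\<And>x y. x \<in> G \<Longrightarrow> y \<in> G \<Longrightarrow> x - y \<in> G" and x: "x \<in> G"
  shows "of_int k *\<^sub>R x \<in> G"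
proof -
  have zero: "0 \<in> G" using diff[OF x x] by simp
  have neg: "- y \<in> G" if "y \<in> G" for y using diff[OF zero that] by simp
  have nat: "of_nat n *\<^sub>R x \<in> G" for n
  proof (induction n)
    case 0
    show ?case using zero by simp
  next
    case (Suc n)
    have "of_nat (Suc n) *\<^sub>R x = x - - (of_nat n *\<^sub>R x)" by (simp add: algebra_simps)
    then show ?case using diff[OF x neg[OF Suc.IH]] by simp
  qed
  show ?thesis
  proof (cases "0 \<le> k")
    case True
    then show ?thesis using nat[of "nat k"] by simp
  next
    case False
    then show ?thesis using neg[OF nat[of "nat (- k)"]] by simp
  qed
qed

lemma separated_Inf_mem:
  fixes P :: "real set"
  assumes ne: "P \<noteq> {}" and bdd: "bdd_below P" and sep: "0 < \<delta>"
    "\<And>x y. x \<in> P \<Longrightarrow> y \<in> P \<Longrightarrow> x \<noteq> y \<Longrightarrow> \<delta> \<le> \<bar>x - y\<bar>"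
  shows "Inf P \<in> P"
proof (rule ccontr)
  assume Inf_notin: "Inf P \<notin> P"
  have above: "Inf P < x" if "x \<in> P" for x
    using cInf_lower[OF that bdd] that Inf_notin by (metis order.not_eq_order_implies_strict)
  obtain x where x: "x \<in> P" "x < Inf P + \<delta>"
    using cInf_less_iff[OF ne bdd, of "Inf P + \<delta>"] sep(1) by auto
  obtain y where y: "y \<in> P" "y < x"
    using cInf_less_iff[OF ne bdd] above[OF x(1)] by blast
  have "\<delta> \<le> \<bar>x - y\<bar>" using sep(2)[OF x(1) y(1)] y(2) by simp
  then show False using x(2) y(2) above[OF y(1)] by linarith
qed

lemma discrete_real_subgroup_cyclic:
  fixes G :: "real set"
  assumes diff: "\<And>x y. x \<in> G \<Longrightarrow> y \<in> G \<Longrightarrow> x - y \<in> G"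
    and sep: "0 < \<delta>" "\<And>g. g \<in> G \<Longrightarrow> g \<noteq> 0 \<Longrightarrow> \<delta> \<le> \<bar>g\<bar>"
    and r: "r \<in> G" "r \<noteq> 0"
  shows "\<exists>r0>0. G = range (\<lambda>k::int. of_int k * r0)"
proof -
  have mult: "of_int k * g \<in> G" if "g \<in> G" for g k
    using int_scale_mem_if_diff_closed[OF diff that, of k] by simp
  define P where "P = {g \<in> G. 0 < g}"
  define r0 where "r0 = Inf P"
  have "\<bar>r\<bar> \<in> G" using r(1) mult[OF r(1), of "-1"] by (cases "r < 0") auto
  then have P_ne: "P \<noteq> {}" using r(2) by (auto simp: P_def)
  have P_bdd: "bdd_below P" by (rule bdd_belowI[of _ 0]) (simp add: P_def)
  have "\<delta> \<le> g" if "g \<in> P" for g using sep(2)[of g] that by (simp add: P_def)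
  then have r0_pos: "0 < r0" unfolding r0_def using P_ne sep(1) by (meson cInf_greatest less_le_trans)
  have r0_in: "r0 \<in> P"
    unfolding r0_def using P_ne P_bdd sep(1)
  proof (rule separated_Inf_mem)
    show "\<delta> \<le> \<bar>x - y\<bar>" if "x \<in> P" "y \<in> P" "x \<noteq> y" for x y
      using that diff sep(2) by (simp add: P_def)
  qed
  have "G = range (\<lambda>k::int. of_int k * r0)"
  proof (intro equalityI subsetI)
    fix g assume g: "g \<in> G"
    define k where "k = \<lfloor>g / r0\<rfloor>"
    have "of_int k \<le> g / r0" "g / r0 < of_int k + 1" unfolding k_def by linarith+
    then have "0 \<le> g - of_int k * r0" "g - of_int k * r0 < r0"
      using r0_pos by (simp_all add: field_simps)
    moreover have "g - of_int k * r0 \<in> G" using diff[OF g mult] r0_in by (simp add: P_def)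
    ultimately have "g - of_int k * r0 = 0"
      using cInf_lower[OF _ P_bdd, of "g - of_int k * r0"] unfolding r0_def P_def by force
    then show "g \<in> range (\<lambda>k::int. of_int k * r0)" by auto
  next
    fix g assume "g \<in> range (\<lambda>k::int. of_int k * r0)"
    then show "g \<in> G" using mult r0_in by (auto simp: P_def)
  qed
  then show ?thesis using r0_pos by blast
qed

lemma int_multiples_eq_imp_eq:
  fixes a b :: real
  assumes "range (\<lambda>k::int. of_int k * a) = range (\<lambda>k::int. of_int k * b)" "0 < a" "0 < b"
  shows "a = b"
proof -
  have le: "y \<le> x" if "range (\<lambda>k::int. of_int k * x) = range (\<lambda>k::int. of_int k * y)" "0 < x" "0 < y"
    for x y :: real
  proof -
    have "x \<in> range (\<lambda>k::int. of_int k * y)" unfolding that(1)[symmetric] by (rule range_eqI[of _ _ 1]) simp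
    then obtain k :: int where k: "x = of_int k * y" by blast
    then have "0 < k" using that(2,3) by (simp add: zero_less_mult_iff)
    then show ?thesis using k that(3) by (simp add: mult_le_cancel_right1)
  qed
  show ?thesis using le[OF assms] le[OF assms(1)[symmetric] assms(3,2)] by simp
qed

locale discrete_subgroup =
  fixes L :: "(real^3) set"
  assumes diff_closed: "x \<in> L \<Longrightarrow> y \<in> L \<Longrightarrow> x - y \<in> L"
    and norm_bounded_below: "\<exists>\<delta>>0. \<forall>x\<in>L. x \<noteq> 0 \<longrightarrow> \<delta> \<le> norm x"
begin

lemma line_multipliers_cyclic:
  assumes "lattice_segment L a b"
  shows "\<exists>c>0. {r. r *\<^sub>R (b - a) \<in> L} = range (\<lambda>k::int. of_int k * c)"
proof -
  define d where "d = b - a"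
  obtain w t where w: "w \<in> L" "w \<noteq> 0" and d: "d = t *\<^sub>R w" and "d \<noteq> 0"
    using assms unfolding lattice_segment_def d_def by force
  then have t: "t \<noteq> 0" by auto
  obtain \<delta> where \<delta>: "0 < \<delta>" "\<And>x. x \<in> L \<Longrightarrow> x \<noteq> 0 \<Longrightarrow> \<delta> \<le> norm x"
    using norm_bounded_below by blast
  have "\<exists>c>0. {r. r *\<^sub>R d \<in> L} = range (\<lambda>k::int. of_int k * c)"
  proof (rule discrete_real_subgroup_cyclic)
    show "x - y \<in> {r. r *\<^sub>R d \<in> L}" if "x \<in> {r. r *\<^sub>R d \<in> L}" "y \<in> {r. r *\<^sub>R d \<in> L}" for x y
      using diff_closed that by (simp add: scaleR_diff_left)
    show "0 < \<delta> / norm d" using \<delta>(1) \<open>d \<noteq> 0\<close> by simp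
    show "\<delta> / norm d \<le> \<bar>g\<bar>" if "g \<in> {r. r *\<^sub>R d \<in> L}" "g \<noteq> 0" for g
      using \<delta>(2)[of "g *\<^sub>R d"] that \<open>d \<noteq> 0\<close> by (simp add: field_simps)
    show "1 / t \<in> {r. r *\<^sub>R d \<in> L}" using w(1) t by (simp add: d)
    show "1 / t \<noteq> 0" using t by simp
  qed
  then show ?thesis unfolding d_def .
qed

lemma primitive_dir_eq:
  assumes "lattice_segment L a b"
  obtains c where "0 < c" "{r. r *\<^sub>R (b - a) \<in> L} = range (\<lambda>k::int. of_int k * c)"
    and "primitive_dir L (b - a) = c *\<^sub>R (b - a)"
proof -
  define d where "d = b - a"
  have "d \<noteq> 0" using assms by (auto simp: lattice_segment_def d_def)
  obtain c where c: "0 < c" "{r. r *\<^sub>R d \<in> L} = range (\<lambda>k::int. of_int k * c)"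
    using line_multipliers_cyclic[OF assms] unfolding d_def by blast
  have primitive_iff: "v \<in> L \<and> (\<exists>c>0. v = c *\<^sub>R d) \<and> L \<inter> span {d} = range (\<lambda>k::int. of_int k *\<^sub>R v)
      \<longleftrightarrow> v = c *\<^sub>R d" for v
  proof
    assume "v \<in> L \<and> (\<exists>c>0. v = c *\<^sub>R d) \<and> L \<inter> span {d} = range (\<lambda>k::int. of_int k *\<^sub>R v)"
    then obtain c' where c': "0 < c'" "v = c' *\<^sub>R d"
      and gen: "L \<inter> span {d} = range (\<lambda>k::int. of_int k *\<^sub>R v)" by blast
    have "r *\<^sub>R d \<in> L \<longleftrightarrow> r *\<^sub>R d \<in> L \<inter> span {d}" for r
      by (auto simp: span_singleton)
    also have "\<dots> r \<longleftrightarrow> (\<exists>k::int. r = of_int k * c')" for r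
      using \<open>d \<noteq> 0\<close> by (auto simp: gen c'(2) scaleR_cancel_right)
    finally have "{r. r *\<^sub>R d \<in> L} = range (\<lambda>k::int. of_int k * c')" by auto
    then show "v = c *\<^sub>R d" using int_multiples_eq_imp_eq c c' by metis
  next
    assume "v = c *\<^sub>R d"
    moreover have "L \<inter> span {d} = range (\<lambda>k::int. of_int k *\<^sub>R (c *\<^sub>R d))"
      using c(2) by (auto simp: set_eq_iff span_singleton)
    ultimately show "v \<in> L \<and> (\<exists>c>0. v = c *\<^sub>R d) \<and> L \<inter> span {d} = range (\<lambda>k::int. of_int k *\<^sub>R v)"
      using c by auto
  qed
  have "primitive_dir L d = c *\<^sub>R d"
    unfolding primitive_dir_def primitive_iff by simp
  then show thesis using that c unfolding d_def by blast
qed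

lemma lattice_length_eq:
  assumes "lattice_segment L a b"
  obtains c where "0 < c" "{r. r *\<^sub>R (b - a) \<in> L} = range (\<lambda>k::int. of_int k * c)"
    and "lattice_length L a b = 1 / c"
proof -
  obtain c where c: "0 < c" "{r. r *\<^sub>R (b - a) \<in> L} = range (\<lambda>k::int. of_int k * c)"
    and prim: "primitive_dir L (b - a) = c *\<^sub>R (b - a)"
    using primitive_dir_eq[OF assms] .
  have "a \<noteq> b" using assms by (simp add: lattice_segment_def)
  then have "lattice_length L a b = 1 / c" using c(1) by (simp add: lattice_length_def prim)
  then show thesis using that c by blast
qed

lemma lattice_length_pos:
  assumes "lattice_segment L a b"
  shows "0 < lattice_length L a b"
  using lattice_length_eq[OF assms] by (metis zero_less_divide_1_iff)

lemma lattice_length_witness: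
  assumes "lattice_segment L a b"
  shows "\<exists>P\<in>L. P \<noteq> 0 \<and> b - a = lattice_length L a b *\<^sub>R P"
proof -
  obtain c where c: "0 < c" "{r. r *\<^sub>R (b - a) \<in> L} = range (\<lambda>k::int. of_int k * c)"
    and len: "lattice_length L a b = 1 / c"
    using lattice_length_eq[OF assms] .
  have "c \<in> range (\<lambda>k::int. of_int k * c)" by (rule range_eqI[of _ _ 1]) simp
  then have "c *\<^sub>R (b - a) \<in> L" using c(2) by blast
  moreover have "a \<noteq> b" using assms by (simp add: lattice_segment_def)
  ultimately show ?thesis using c(1) by (intro bexI[of _ "c *\<^sub>R (b - a)"]) (auto simp: len)
qed

lemma lattice_length_ge:
  assumes "lattice_segment L a b" "w \<in> L" "0 < s" "b - a = s *\<^sub>R w"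
  shows "s \<le> lattice_length L a b"
proof -
  obtain c where c: "0 < c" "{r. r *\<^sub>R (b - a) \<in> L} = range (\<lambda>k::int. of_int k * c)"
    and len: "lattice_length L a b = 1 / c"
    using lattice_length_eq[OF assms(1)] .
  have "(1 / s) *\<^sub>R (b - a) \<in> L" using assms(2-4) by simp
  then obtain k :: int where k: "1 / s = of_int k * c" using c(2) by blast
  moreover have "0 < 1 / s" using assms(3) by simp
  ultimately have "0 < k" using c(1) by (simp add: zero_less_mult_iff)
  then have "c \<le> 1 / s" using k c(1) by (simp add: mult_le_cancel_right1)
  then show ?thesis unfolding len using assms(3) c(1) by (simp add: field_simps)
qed

lemma bdd_above_lattice_lengths:
  assumes "bounded C"
  shows "bdd_above {lattice_length L a b | a b. lattice_segment L a b \<and> closed_segment a b \<subseteq> C}"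
proof -
  obtain \<delta> where \<delta>: "0 < \<delta>" "\<And>x. x \<in> L \<Longrightarrow> x \<noteq> 0 \<Longrightarrow> \<delta> \<le> norm x"
    using norm_bounded_below by blast
  obtain R where R: "\<And>x. x \<in> C \<Longrightarrow> norm x \<le> R" using assms by (auto simp: bounded_iff)
  have "lattice_length L a b \<le> 2 * R / \<delta>"
    if seg: "lattice_segment L a b" and sub: "closed_segment a b \<subseteq> C" for a b
  proof -
    obtain P where P: "P \<in> L" "P \<noteq> 0" "b - a = lattice_length L a b *\<^sub>R P"
      using lattice_length_witness[OF seg] by blast
    have "lattice_length L a b * \<delta> \<le> lattice_length L a b * norm P"
      using lattice_length_pos[OF seg] \<delta>(2)[OF P(1,2)] by simp
    also have "\<dots> = norm (b - a)" using lattice_length_pos[OF seg] by (simp add: P(3))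
    also have "\<dots> \<le> 2 * R"
      using R sub ends_in_segment norm_triangle_ineq4[of b a] by (smt (verit) subsetD)
    finally show ?thesis using \<delta>(1) by (simp add: field_simps)
  qed
  then show ?thesis by (intro bdd_aboveI) blast
qed

lemma lattice_length_le_lattice_diam:
  assumes "bounded C" "lattice_segment L a b" "closed_segment a b \<subseteq> C"
  shows "lattice_length L a b \<le> lattice_diam L C"
  unfolding lattice_diam_def using assms by (intro cSup_upper bdd_above_lattice_lengths) auto

end

abbreviation \<Lambda> :: "real \<Rightarrow> real \<Rightarrow> real \<Rightarrow> (real^3) set" where
  "\<Lambda> \<alpha> \<beta> \<gamma> \<equiv> int_span3 (vector [-\<alpha>, \<beta>, \<gamma>]) (vector [\<alpha>, -\<beta>, \<gamma>]) (vector [\<alpha>, \<beta>, -\<gamma>])"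

lemma mem_Lambda_iff:
  fixes \<alpha> \<beta> \<gamma> :: real
  shows "x \<in> \<Lambda> \<alpha> \<beta> \<gamma> \<longleftrightarrow>
     (\<exists>A B C :: int. even (A + B) \<and> even (B + C) \<and> x = vector [\<alpha> * A, \<beta> * B, \<gamma> * C])"
proof
  assume "x \<in> \<Lambda> \<alpha> \<beta> \<gamma>"
  then obtain i j k :: int
    where x: "x = i *\<^sub>R vector [-\<alpha>, \<beta>, \<gamma>] + j *\<^sub>R vector [\<alpha>, -\<beta>, \<gamma>] + k *\<^sub>R vector [\<alpha>, \<beta>, -\<gamma>]"
    unfolding int_span3_def by blast
  show "\<exists>A B C :: int. even (A + B) \<and> even (B + C) \<and> x = vector [\<alpha> * A, \<beta> * B, \<gamma> * C]"
    by (rule exI[of _ "- i + j + k"], rule exI[of _ "i - j + k"], rule exI[of _ "i + j - k"])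
      (simp add: x vec_eq_iff forall_3 algebra_simps)
next
  assume "\<exists>A B C :: int. even (A + B) \<and> even (B + C) \<and> x = vector [\<alpha> * A, \<beta> * B, \<gamma> * C]"
  then obtain A B C :: int where "even (A + B)" "even (B + C)"
    and x: "x = vector [\<alpha> * A, \<beta> * B, \<gamma> * C]" by blast
  then obtain k i where k: "A + B = 2 * k" and i: "B + C = 2 * i" by (metis evenE)
  show "x \<in> \<Lambda> \<alpha> \<beta> \<gamma>"
    unfolding int_span3_def
  proof (intro CollectI exI conjI)
    have "A = 2 * k - B" "C = 2 * i - B" using k i by linarith+
    then have x': "x = vector [\<alpha> * of_int (2 * k - B), \<beta> * B, \<gamma> * of_int (2 * i - B)]"
      using x by simp
    show "x = of_int i *\<^sub>R vector [-\<alpha>, \<beta>, \<gamma>] + of_int (k + i - B) *\<^sub>R vector [\<alpha>, -\<beta>, \<gamma>]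
        + of_int k *\<^sub>R vector [\<alpha>, \<beta>, -\<gamma>]"
      by (simp add: x' vec_eq_iff forall_3 algebra_simps)
  qed simp
qed

lemma vector_mem_Lambda: "vector [\<alpha>, \<beta>, \<gamma>] \<in> \<Lambda> \<alpha> \<beta> \<gamma>"
  unfolding mem_Lambda_iff by (intro exI[of _ 1]) simp

lemma Lambda_nonzero_coordinate_bounds:
  fixes \<alpha> \<beta> \<gamma> :: real
  assumes "1/2 \<le> \<alpha>" "1/2 \<le> \<beta>" "1/2 \<le> \<gamma>" "P \<in> \<Lambda> \<alpha> \<beta> \<gamma>" "P \<noteq> 0"
  shows "(\<alpha> \<le> \<bar>P$1\<bar> \<and> \<beta> \<le> \<bar>P$2\<bar> \<and> \<gamma> \<le> \<bar>P$3\<bar>) \<or> (\<exists>i. 1 \<le> \<bar>P$i\<bar>)"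
proof -
  obtain A B C :: int where par: "even (A + B)" "even (B + C)"
    and P: "P = vector [\<alpha> * A, \<beta> * B, \<gamma> * C]"
    using assms(4) unfolding mem_Lambda_iff by blast
  have P_abs: "\<bar>P$1\<bar> = \<alpha> * \<bar>of_int A\<bar>" "\<bar>P$2\<bar> = \<beta> * \<bar>of_int B\<bar>" "\<bar>P$3\<bar> = \<gamma> * \<bar>of_int C\<bar>"
    using assms(1-3) by (simp_all add: P abs_mult)
  show ?thesis
  proof (cases "odd A")
    case True
    have one_le: "1 \<le> \<bar>real_of_int M\<bar>" if "odd M" for M :: int
      using of_int_leD[OF order_refl, of M] that by auto
    have "odd B" "odd C" using True par by presburger+
    then have "\<alpha> \<le> \<bar>P$1\<bar> \<and> \<beta> \<le> \<bar>P$2\<bar> \<and> \<gamma> \<le> \<bar>P$3\<bar>"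
      unfolding P_abs using one_le True assms(1-3) by (simp add: mult_le_cancel_left1)
    then show ?thesis ..
  next
    case False
    have two_le: "2 \<le> \<bar>real_of_int M\<bar>" if "even M" "M \<noteq> 0" for M :: int
    proof -
      have "2 \<le> \<bar>M\<bar>" using that by (auto elim!: evenE)
      then show ?thesis using of_int_le_iff[of 2 "\<bar>M\<bar>", where 'a=real] by simp
    qed
    have one_le: "1 \<le> a * x" if "1/2 \<le> a" "2 \<le> x" for a x :: real
      using mult_mono[OF that] that by simp
    have ev: "even A" "even B" "even C" using False par by presburger+
    have "1 \<le> \<bar>P$1\<bar>" if "A \<noteq> 0"
      unfolding P_abs by (rule one_le[OF assms(1) two_le[OF ev(1) that]])
    moreover have "1 \<le> \<bar>P$2\<bar>" if "B \<noteq> 0"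
      unfolding P_abs by (rule one_le[OF assms(2) two_le[OF ev(2) that]])
    moreover have "1 \<le> \<bar>P$3\<bar>" if "C \<noteq> 0"
      unfolding P_abs by (rule one_le[OF assms(3) two_le[OF ev(3) that]])
    moreover have "A \<noteq> 0 \<or> B \<noteq> 0 \<or> C \<noteq> 0" using assms(5) by (auto simp: P vec_eq_iff forall_3)
    ultimately show ?thesis by blast
  qed
qed

lemma Lambda_discrete_subgroup:
  fixes \<alpha> \<beta> \<gamma> :: real
  assumes "1/2 \<le> \<alpha>" "1/2 \<le> \<beta>" "1/2 \<le> \<gamma>"
  shows "discrete_subgroup (\<Lambda> \<alpha> \<beta> \<gamma>)"
proof
  fix x y assume "x \<in> \<Lambda> \<alpha> \<beta> \<gamma>" "y \<in> \<Lambda> \<alpha> \<beta> \<gamma>"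
  then obtain A B C A' B' C' :: int
    where "even (A + B)" "even (B + C)" "x = vector [\<alpha> * A, \<beta> * B, \<gamma> * C]"
      and "even (A' + B')" "even (B' + C')" "y = vector [\<alpha> * A', \<beta> * B', \<gamma> * C']"
    unfolding mem_Lambda_iff by blast
  then show "x - y \<in> \<Lambda> \<alpha> \<beta> \<gamma>"
    unfolding mem_Lambda_iff
    by (intro exI[of _ "A - A'"] exI[of _ "B - B'"] exI[of _ "C - C'"])
      (auto simp: vec_eq_iff forall_3 algebra_simps)
next
  have "1/2 \<le> norm P" if P: "P \<in> \<Lambda> \<alpha> \<beta> \<gamma>" "P \<noteq> 0" for P
  proof -
    consider "\<alpha> \<le> \<bar>P$1\<bar>" | i where "1 \<le> \<bar>P$i\<bar>"
      using Lambda_nonzero_coordinate_bounds[OF assms P] by blast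
    then show ?thesis
    proof cases
      case 1
      then show ?thesis using assms(1) component_le_norm_cart[of P 1] by linarith
    next
      case (2 i)
      then show ?thesis using component_le_norm_cart[of P i] by linarith
    qed
  qed
  then show "\<exists>\<delta>>0. \<forall>x\<in>\<Lambda> \<alpha> \<beta> \<gamma>. x \<noteq> 0 \<longrightarrow> \<delta> \<le> norm x"
    by (intro exI[of _ "1/2"]) auto
qed

abbreviation Delta_vertices :: "(real^3) set" where
  "Delta_vertices \<equiv> {0, e 1 + e 2, e 1 + e 3, e 2 + e 3}"

abbreviation \<Delta> :: "(real^3) set" where
  "\<Delta> \<equiv> convex hull Delta_vertices"

lemma e_sums: "e 1 + e 2 = vector [1, 1, 0]" "e 1 + e 3 = vector [1, 0, 1]" "e 2 + e 3 = vector [0, 1, 1]"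
  by (simp_all add: vec_eq_iff forall_3 e_def axis_def)

lemma mem_Delta_iff:
  "x \<in> \<Delta> \<longleftrightarrow> x$1 + x$2 + x$3 \<le> 2 \<and> x$1 \<le> x$2 + x$3 \<and> x$2 \<le> x$1 + x$3 \<and> x$3 \<le> x$1 + x$2"
  (is "_ \<longleftrightarrow> ?P x")
proof
  let ?H = "{x. ?P x}"
  have "?H = {x. vector [1, 1, 1] \<bullet> x \<le> 2} \<inter> {x. vector [1, -1, -1] \<bullet> x \<le> 0}
      \<inter> {x. vector [-1, 1, -1] \<bullet> x \<le> 0} \<inter> {x. vector [-1, -1, 1] \<bullet> x \<le> 0}"
    by (auto simp: inner_vec_def sum_3)
  then have "convex ?H" by (simp add: convex_Int convex_halfspace_le)
  moreover have "Delta_vertices \<subseteq> ?H" by (simp add: e_sums)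
  ultimately show "?P x" if "x \<in> \<Delta>" using that hull_minimal by blast
next
  assume H: "?P x"
  define l1 l2 l3 where "l1 = (x$1 + x$2 - x$3) / 2" "l2 = (x$1 + x$3 - x$2) / 2"
    "l3 = (x$2 + x$3 - x$1) / 2"
  define \<sigma> where "\<sigma> = l1 + l2 + l3"
  have l: "0 \<le> l1" "0 \<le> l2" "0 \<le> l3" "\<sigma> \<le> 1" using H by (auto simp: l1_l2_l3_def \<sigma>_def field_simps)
  have x: "x = l1 *\<^sub>R (e 1 + e 2) + l2 *\<^sub>R (e 1 + e 3) + l3 *\<^sub>R (e 2 + e 3)"
    by (simp add: l1_l2_l3_def e_sums vec_eq_iff forall_3 field_simps)
  show "x \<in> \<Delta>"
  proof (cases "\<sigma> = 0")
    case True
    then have "l1 = 0" "l2 = 0" "l3 = 0" using l unfolding \<sigma>_def by linarith+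
    then have "x = 0" by (simp add: x)
    then show ?thesis by (simp add: hull_inc)
  next
    case False
    define m where "m = (l1 / \<sigma>) *\<^sub>R (e 1 + e 2) + (l2 / \<sigma>) *\<^sub>R (e 1 + e 3) + (l3 / \<sigma>) *\<^sub>R (e 2 + e 3)"
    have "0 < \<sigma>" using False l by (simp add: \<sigma>_def)
    then have "m \<in> convex hull {e 1 + e 2, e 1 + e 3, e 2 + e 3}"
      unfolding convex_hull_3 m_def using l
      by (intro CollectI exI[of _ "l1 / \<sigma>"] exI[of _ "l2 / \<sigma>"] exI[of _ "l3 / \<sigma>"] conjI)
        (simp_all add: \<sigma>_def[symmetric] add_divide_distrib[symmetric])
    then have "m \<in> \<Delta>" by (rule rev_subsetD) (intro hull_mono, blast)
    moreover have "0 \<in> \<Delta>" by (simp add: hull_inc)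
    ultimately have "(1 - \<sigma>) *\<^sub>R 0 + \<sigma> *\<^sub>R m \<in> \<Delta>"
      using \<open>0 < \<sigma>\<close> l(4) by (intro convexD[OF convex_convex_hull]) auto
    moreover have "(1 - \<sigma>) *\<^sub>R 0 + \<sigma> *\<^sub>R m = x"
      using False by (simp add: x m_def scaleR_add_right)
    ultimately show ?thesis by simp
  qed
qed

lemma Delta_coordinate_diffs:
  assumes "x \<in> \<Delta>" "y \<in> \<Delta>"
  shows "\<bar>y$1 - x$1\<bar> + \<bar>y$2 - x$2\<bar> + \<bar>y$3 - x$3\<bar> \<le> 2" "\<bar>y$i - x$i\<bar> \<le> 1"
proof -
  note ineqs = assms[unfolded mem_Delta_iff]
  show "\<bar>y$1 - x$1\<bar> + \<bar>y$2 - x$2\<bar> + \<bar>y$3 - x$3\<bar> \<le> 2" using ineqs by (auto simp: abs_if)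
  have "\<bar>y$1 - x$1\<bar> \<le> 1" "\<bar>y$2 - x$2\<bar> \<le> 1" "\<bar>y$3 - x$3\<bar> \<le> 1" using ineqs by (auto simp: abs_if)
  then show "\<bar>y$i - x$i\<bar> \<le> 1" using exhaust_3[of i] by auto
qed

lemma lattice_length_in_Delta_le_1:
  fixes \<alpha> \<beta> \<gamma> :: real
  assumes abc: "1/2 \<le> \<alpha>" "1/2 \<le> \<beta>" "1/2 \<le> \<gamma>" "\<alpha> + \<beta> + \<gamma> = 2"
    and seg: "lattice_segment (\<Lambda> \<alpha> \<beta> \<gamma>) a b" and ab: "a \<in> \<Delta>" "b \<in> \<Delta>"
  shows "lattice_length (\<Lambda> \<alpha> \<beta> \<gamma>) a b \<le> 1"
proof -
  interpret discrete_subgroup "\<Lambda> \<alpha> \<beta> \<gamma>" by (rule Lambda_discrete_subgroup[OF abc(1-3)])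
  define len where "len = lattice_length (\<Lambda> \<alpha> \<beta> \<gamma>) a b"
  have "0 < len" unfolding len_def by (rule lattice_length_pos[OF seg])
  obtain P where P: "P \<in> \<Lambda> \<alpha> \<beta> \<gamma>" "P \<noteq> 0" "b - a = len *\<^sub>R P"
    using lattice_length_witness[OF seg] unfolding len_def by blast
  have diff: "\<bar>b$i - a$i\<bar> = len * \<bar>P$i\<bar>" for i
    using arg_cong[OF P(3), of "\<lambda>v. v$i"] \<open>0 < len\<close> by (simp add: abs_mult)
  consider "\<alpha> \<le> \<bar>P$1\<bar>" "\<beta> \<le> \<bar>P$2\<bar>" "\<gamma> \<le> \<bar>P$3\<bar>" | i where "1 \<le> \<bar>P$i\<bar>"
    using Lambda_nonzero_coordinate_bounds[OF abc(1-3) P(1,2)] by blast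
  then show ?thesis
  proof cases
    case 1
    then have "len * 2 \<le> len * (\<bar>P$1\<bar> + \<bar>P$2\<bar> + \<bar>P$3\<bar>)"
      using \<open>0 < len\<close> abc(4) by (intro mult_left_mono) auto
    also have "\<dots> \<le> 2" using Delta_coordinate_diffs(1)[OF ab] by (simp add: diff distrib_left)
    finally show ?thesis using \<open>0 < len\<close> by (simp add: len_def)
  next
    case (2 i)
    then have "len * 1 \<le> len * \<bar>P$i\<bar>" using \<open>0 < len\<close> by (intro mult_left_mono) auto
    also have "\<dots> \<le> 1" using Delta_coordinate_diffs(2)[OF ab, of i] by (simp add: diff)
    finally show ?thesis by (simp add: len_def)
  qed
qed

lemma lattice_diam_Delta_le_1:
  fixes \<alpha> \<beta> \<gamma> :: real
  assumes "1/2 \<le> \<alpha>" "\<alpha> < 1" "1/2 \<le> \<beta>" "\<beta> < 1" "1/2 \<le> \<gamma>" "\<gamma> < 1" "\<alpha> + \<beta> + \<gamma> = 2"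
  shows "lattice_diam (\<Lambda> \<alpha> \<beta> \<gamma>) \<Delta> \<le> 1"
  unfolding lattice_diam_def
proof (rule cSup_least)
  let ?v = "vector [\<alpha>, \<beta>, \<gamma>] :: real^3"
  have "?v \<in> \<Delta>" using assms by (simp add: mem_Delta_iff)
  moreover have "0 \<in> \<Delta>" by (simp add: hull_inc)
  ultimately have "closed_segment 0 ?v \<subseteq> \<Delta>" by (simp add: closed_segment_subset)
  moreover have "lattice_segment (\<Lambda> \<alpha> \<beta> \<gamma>) 0 ?v"
    unfolding lattice_segment_def using vector_mem_Lambda assms(1)
    by (intro conjI bexI[of _ ?v]) (auto simp: vec_eq_iff forall_3 intro: exI[of _ 1])
  ultimately show "{lattice_length (\<Lambda> \<alpha> \<beta> \<gamma>) a b | a b.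
      lattice_segment (\<Lambda> \<alpha> \<beta> \<gamma>) a b \<and> closed_segment a b \<subseteq> \<Delta>} \<noteq> {}"
    by blast
next
  fix len assume "len \<in> {lattice_length (\<Lambda> \<alpha> \<beta> \<gamma>) a b | a b.
      lattice_segment (\<Lambda> \<alpha> \<beta> \<gamma>) a b \<and> closed_segment a b \<subseteq> \<Delta>}"
  then show "len \<le> 1" using assms lattice_length_in_Delta_le_1 ends_in_segment by blast
qed

definition vertex_reflection :: "real^3 \<Rightarrow> real^3 \<Rightarrow> real^3" where
  "vertex_reflection w x = (\<chi> i. w$i + (1 - 2 * w$i) * x$i)"

lemma vertex_reflection_involution:
  "w \<in> Delta_vertices \<Longrightarrow> vertex_reflection w (vertex_reflection w x) = x"
  by (auto simp: vertex_reflection_def e_sums vec_eq_iff forall_3)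

lemma vertex_reflection_convex_combination:
  "vertex_reflection w ((1 - t) *\<^sub>R a + t *\<^sub>R b) =
     (1 - t) *\<^sub>R vertex_reflection w a + t *\<^sub>R vertex_reflection w b"
  by (simp add: vertex_reflection_def vec_eq_iff algebra_simps)

lemma vertex_reflection_Delta:
  "w \<in> Delta_vertices \<Longrightarrow> x \<in> \<Delta> \<Longrightarrow> vertex_reflection w x \<in> \<Delta>"
  unfolding mem_Delta_iff by (auto simp: vertex_reflection_def e_sums)

lemma exists_vertex_reflection_beyond_top_facet:
  assumes "x \<notin> \<Delta>"
  shows "\<exists>w\<in>Delta_vertices. 2 < vertex_reflection w x $ 1 + vertex_reflection w x $ 2 + vertex_reflection w x $ 3"
  using assms unfolding mem_Delta_iff by (auto simp: vertex_reflection_def e_sums)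

lemma vertex_reflection_scaled_vector:
  fixes \<alpha> \<beta> \<gamma> :: real
  assumes "0 < \<alpha>" "w \<in> Delta_vertices"
  shows "\<exists>u\<in>\<Lambda> \<alpha> \<beta> \<gamma>. u \<noteq> 0 \<and> vertex_reflection w (s *\<^sub>R vector [\<alpha>, \<beta>, \<gamma>]) = w + s *\<^sub>R u"
proof -
  have mem: "vector [\<alpha> * A, \<beta> * B, \<gamma> * C] \<in> \<Lambda> \<alpha> \<beta> \<gamma>" if "odd A" "odd B" "odd C" for A B C :: int
    unfolding mem_Lambda_iff using that by (intro exI conjI refl) auto
  consider "w = 0" | "w = vector [1, 1, 0]" | "w = vector [1, 0, 1]" | "w = vector [0, 1, 1]"
    using assms(2) by (auto simp: e_sums)
  then show ?thesis
  proof cases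
    case 1
    then show ?thesis using mem[of 1 1 1] assms(1)
      by (intro bexI[of _ "vector [\<alpha>, \<beta>, \<gamma>]"]) (auto simp: vertex_reflection_def vec_eq_iff forall_3)
  next
    case 2
    then show ?thesis using mem[of "-1" "-1" 1] assms(1)
      by (intro bexI[of _ "vector [-\<alpha>, -\<beta>, \<gamma>]"]) (auto simp: vertex_reflection_def vec_eq_iff forall_3)
  next
    case 3
    then show ?thesis using mem[of "-1" 1 "-1"] assms(1)
      by (intro bexI[of _ "vector [-\<alpha>, \<beta>, -\<gamma>]"]) (auto simp: vertex_reflection_def vec_eq_iff forall_3)
  next
    case 4
    then show ?thesis using mem[of 1 "-1" "-1"] assms(1)
      by (intro bexI[of _ "vector [\<alpha>, -\<beta>, -\<gamma>]"]) (auto simp: vertex_reflection_def vec_eq_iff forall_3)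
  qed
qed

lemma segment_beyond_top_facet:
  fixes \<alpha> \<beta> \<gamma> :: real
  assumes abc: "\<alpha> < 1" "\<beta> < 1" "\<gamma> < 1" "\<alpha> + \<beta> + \<gamma> = 2" and p: "2 < p$1 + p$2 + p$3"
  shows "\<exists>f\<in>\<Delta>. \<exists>t\<in>{0..1}. \<exists>s>1. (1 - t) *\<^sub>R f + t *\<^sub>R p = s *\<^sub>R vector [\<alpha>, \<beta>, \<gamma>]"
proof -
  let ?v = "vector [\<alpha>, \<beta>, \<gamma>] :: real^3"
  define \<sigma> where "\<sigma> = p$1 + p$2 + p$3"
  (* f = v + \<tau> g stays on the facet and, for small \<tau> > 0, in \<Delta>; the point of [f, p] with
     parameter \<tau> / (1 + \<tau>) is then a multiple of v *)
  define g where "g = (\<sigma> / 2) *\<^sub>R ?v - p"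
  define U where "U = {x::real^3. x$1 < x$2 + x$3 \<and> x$2 < x$1 + x$3 \<and> x$3 < x$1 + x$2}"
  have "open U" unfolding U_def by (intro open_Collect_conj open_Collect_less continuous_intros)
  moreover have "?v \<in> U" using abc by (simp add: U_def)
  moreover have "((\<lambda>\<tau>. ?v + \<tau> *\<^sub>R g) \<longlongrightarrow> ?v) (at_right 0)"
    by (auto intro!: tendsto_eq_intros)
  ultimately have "\<forall>\<^sub>F \<tau> in at_right 0. ?v + \<tau> *\<^sub>R g \<in> U" using topological_tendstoD by blast
  then obtain \<tau> :: real where \<tau>: "0 < \<tau>" "?v + \<tau> *\<^sub>R g \<in> U"
    using eventually_happens'[OF trivial_limit_at_right_real eventually_conj[OF eventually_at_right_less]]
    by blast
  define f where "f = ?v + \<tau> *\<^sub>R g"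
  have "g$1 + g$2 + g$3 = (\<sigma> / 2) * (\<alpha> + \<beta> + \<gamma>) - (p$1 + p$2 + p$3)"
    by (simp add: g_def algebra_simps)
  also have "\<dots> = 0" using abc(4) by (simp add: \<sigma>_def)
  finally have "g$1 + g$2 + g$3 = 0" .
  moreover have "f$1 + f$2 + f$3 = (\<alpha> + \<beta> + \<gamma>) + \<tau> * (g$1 + g$2 + g$3)"
    by (simp add: f_def algebra_simps)
  ultimately have "f$1 + f$2 + f$3 = 2" using abc(4) by simp
  then have "f \<in> \<Delta>" using \<tau>(2) by (simp add: mem_Delta_iff f_def U_def)
  moreover have "\<tau> / (1 + \<tau>) \<in> {0..1}" using \<tau>(1) by simp
  moreover have "1 < (1 + \<tau> * \<sigma> / 2) / (1 + \<tau>)"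
  proof -
    have "\<tau> * 2 < \<tau> * \<sigma>" using \<tau>(1) p by (intro mult_strict_left_mono) (simp_all add: \<sigma>_def)
    then show ?thesis using \<tau>(1) by (simp add: field_simps)
  qed
  moreover have "(1 - \<tau> / (1 + \<tau>)) *\<^sub>R f + (\<tau> / (1 + \<tau>)) *\<^sub>R p = ((1 + \<tau> * \<sigma> / 2) / (1 + \<tau>)) *\<^sub>R ?v"
  proof -
    have "1 - \<tau> / (1 + \<tau>) = 1 / (1 + \<tau>)" using \<tau>(1) by (simp add: field_simps)
    then have "(1 - \<tau> / (1 + \<tau>)) *\<^sub>R f + (\<tau> / (1 + \<tau>)) *\<^sub>R p = (1 / (1 + \<tau>)) *\<^sub>R (f + \<tau> *\<^sub>R p)"
      by (simp add: scaleR_add_right)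
    also have "f + \<tau> *\<^sub>R p = (1 + \<tau> * \<sigma> / 2) *\<^sub>R ?v" by (simp add: f_def g_def algebra_simps)
    finally show ?thesis by simp
  qed
  ultimately show ?thesis by blast
qed

lemma lattice_diam_gt_1:
  fixes \<alpha> \<beta> \<gamma> :: real
  assumes abc: "1/2 \<le> \<alpha>" "\<alpha> < 1" "1/2 \<le> \<beta>" "\<beta> < 1" "1/2 \<le> \<gamma>" "\<gamma> < 1" "\<alpha> + \<beta> + \<gamma> = 2"
    and C: "convex_body C" "\<Delta> \<subseteq> C" and p: "p \<in> C" "p \<notin> \<Delta>"
  shows "1 < lattice_diam (\<Lambda> \<alpha> \<beta> \<gamma>) C"
proof -
  interpret discrete_subgroup "\<Lambda> \<alpha> \<beta> \<gamma>" by (rule Lambda_discrete_subgroup) (use abc in auto)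
  have "convex C" "bounded C" using C(1) by (auto simp: convex_body_def compact_imp_bounded)
  obtain w where w: "w \<in> Delta_vertices"
    and "2 < vertex_reflection w p $ 1 + vertex_reflection w p $ 2 + vertex_reflection w p $ 3"
    using exists_vertex_reflection_beyond_top_facet[OF p(2)] by blast
  then obtain f t s where f: "f \<in> \<Delta>" and t: "t \<in> {0..1}" and s: "1 < s"
    and comb: "(1 - t) *\<^sub>R f + t *\<^sub>R vertex_reflection w p = s *\<^sub>R vector [\<alpha>, \<beta>, \<gamma>]"
    using segment_beyond_top_facet[OF abc(2,4,6,7)] by blast
  obtain u where u: "u \<in> \<Lambda> \<alpha> \<beta> \<gamma>" "u \<noteq> 0"
    and u_eq: "vertex_reflection w (s *\<^sub>R vector [\<alpha>, \<beta>, \<gamma>]) = w + s *\<^sub>R u"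
    using vertex_reflection_scaled_vector[OF _ w, of \<alpha> \<beta> \<gamma> s] abc(1) by auto
  define y where "y = (1 - t) *\<^sub>R vertex_reflection w f + t *\<^sub>R p"
  have "y = vertex_reflection w ((1 - t) *\<^sub>R f + t *\<^sub>R vertex_reflection w p)"
    by (simp add: y_def vertex_reflection_convex_combination vertex_reflection_involution[OF w])
  then have y_w: "y - w = s *\<^sub>R u" by (simp add: comb u_eq)
  have "w \<in> C" using hull_inc[OF w] C(2) by (rule subsetD[rotated])
  moreover have "y \<in> C"
    unfolding y_def using vertex_reflection_Delta[OF w f] C(2) p(1) t \<open>convex C\<close>
    by (intro convexD) auto
  ultimately have seg_C: "closed_segment w y \<subseteq> C" using \<open>convex C\<close> by (rule closed_segment_subset)
  have seg: "lattice_segment (\<Lambda> \<alpha> \<beta> \<gamma>) w y"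
    unfolding lattice_segment_def using u y_w s by (intro conjI bexI[of _ u]) auto
  have "lattice_length (\<Lambda> \<alpha> \<beta> \<gamma>) w y \<le> lattice_diam (\<Lambda> \<alpha> \<beta> \<gamma>) C"
    by (rule lattice_length_le_lattice_diam[OF \<open>bounded C\<close> seg seg_C])
  moreover have "s \<le> lattice_length (\<Lambda> \<alpha> \<beta> \<gamma>) w y"
    using lattice_length_ge[OF seg u(1) _ y_w] s by simp
  ultimately show ?thesis using s by linarith
qed

theorem proposition4p10:
  fixes \<alpha> \<beta> \<gamma> :: real
  assumes "1/2 \<le> \<alpha>" "\<alpha> < 1" "1/2 \<le> \<beta>" "\<beta> < 1" "1/2 \<le> \<gamma>" "\<gamma> < 1"
    and "\<alpha> + \<beta> + \<gamma> = 2"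
  shows "lattice_complete
           (int_span3 (vector [-\<alpha>, \<beta>, \<gamma>]) (vector [\<alpha>, -\<beta>, \<gamma>]) (vector [\<alpha>, \<beta>, -\<gamma>]))
           (convex hull {0, e 1 + e 2, e 1 + e 3, e 2 + e 3})"
  unfolding lattice_complete_def
proof
  assume "\<exists>C. convex_body C \<and> \<Delta> \<subset> C \<and> lattice_diam (\<Lambda> \<alpha> \<beta> \<gamma>) C = lattice_diam (\<Lambda> \<alpha> \<beta> \<gamma>) \<Delta>"
  then obtain C p where C: "convex_body C" "\<Delta> \<subseteq> C" "p \<in> C" "p \<notin> \<Delta>"
    and same_diam: "lattice_diam (\<Lambda> \<alpha> \<beta> \<gamma>) C = lattice_diam (\<Lambda> \<alpha> \<beta> \<gamma>) \<Delta>"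
    unfolding psubset_eq by blast
  have "1 < lattice_diam (\<Lambda> \<alpha> \<beta> \<gamma>) C" using lattice_diam_gt_1[OF assms C] .
  moreover have "lattice_diam (\<Lambda> \<alpha> \<beta> \<gamma>) \<Delta> \<le> 1" using lattice_diam_Delta_le_1[OF assms] .
  ultimately show False using same_diam by simp
qed

end
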